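(* Let $S>0$, $d\ge1$, $\Delta s=S/(d+1)$ and $\boldsymbol L$ the $d\times d$ tridiagonal matrix $\Delta s^{-2}\,\mathrm{tridiag}(1,-2,1)$. Consider the linear Hamiltonian system in $(\boldsymbol u,\boldsymbol p)\in\mathbb{R}^d\times\mathbb{R}^d$ $$\dot{\boldsymbol u}=-\boldsymbol L^{-1}\boldsymbol p,\qquad \dot{\boldsymbol p}=\boldsymbol L\boldsymbol u-\boldsymbol u,$$ and for $c\in[0,1]$ the Strang splitting integrator $\psi_h=\varphi^{(B)}_{h/2}\circ\varphi^{(A)}_h\circ\varphi^{(B)}_{h/2}$, where $\varphi^{(A)}_t$ is the flow of $\dot{\boldsymbol u}=-\boldsymbol L^{-1}\boldsymbol p,\ \dot{\boldsymbol p}=c^2\boldsymbol L\boldsymbol u$ and $\varphi^{(B)}_t$ the flow of $\dot{\boldsymbol u}=0,\ \dot{\boldsymbol p}=(1-c^2)\boldsymbol L\boldsymbol u-\boldsymbol u$. Let $\omega_1^2=\frac4{\Delta s^2}\sin^2\!\big(\frac\pi{2(d+1)}\big)$ be the smallest eigenvalue of $-\boldsymbol L$. If $h>0$ satisfies $$ch+2\arctan\!\Big(\frac{h(1+(1-c^2)\omega_1^2)}{2c\omega_1^2}\Big)<\pi\ \text{ if }c\in(0,1],\qquad h<\frac{2\omega_1}{\sqrt{1+\omega_1^2}}\ \text{ if }c=0,$$ then the integrator is stable, i.e. the powers $\psi_h^n$, $n=0,1,2,\dots$, are uniformly bounded.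
   Context: This is the integrator used in preconditioned HMC (mass matrix $-\boldsymbol L$) for the discretized Ornstein–Uhlenbeck bridge on $[0,S]$ with homogeneous Dirichlet conditions; $c=0$ gives velocity Verlet. *)

theory Defs
  imports Complex_Main "Jordan_Normal_Form.Matrix"
begin

definition ds :: "real \<Rightarrow> nat \<Rightarrow> real" where
  "ds S d = S / real (d + 1)"

definition Lmat :: "real \<Rightarrow> nat \<Rightarrow> real mat" where
  "Lmat S d = mat d d (\<lambda>(i, j).
     (if i = j then -2 else if i = j + 1 \<or> j = i + 1 then 1 else 0) / (ds S d)\<^sup>2)"

definition Linv :: "real \<Rightarrow> nat \<Rightarrow> real mat" where
  "Linv S d = (THE B. B \<in> carrier_mat d d \<and> Lmat S d * B = 1\<^sub>m d \<and> B * Lmat S d = 1\<^sub>m d)"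

definition lin_flow :: "nat \<Rightarrow> real mat \<Rightarrow> real \<Rightarrow> real vec \<Rightarrow> real vec" where
  "lin_flow n M t x = (THE y. \<exists>X :: real \<Rightarrow> real vec.
      (\<forall>s. dim_vec (X s) = n) \<and> X 0 = x \<and>
      (\<forall>s. \<forall>i<n. ((\<lambda>r. X r $ i) has_real_derivative (M *\<^sub>v X s) $ i) (at s)) \<and>
      X t = y)"

definition MA :: "real \<Rightarrow> nat \<Rightarrow> real \<Rightarrow> real mat" where
  "MA S d c = four_block_mat (0\<^sub>m d d) (- Linv S d) (c\<^sup>2 \<cdot>\<^sub>m Lmat S d) (0\<^sub>m d d)"

definition MB :: "real \<Rightarrow> nat \<Rightarrow> real \<Rightarrow> real mat" where
  "MB S d c = four_block_mat (0\<^sub>m d d) (0\<^sub>m d d) ((1 - c\<^sup>2) \<cdot>\<^sub>m Lmat S d - 1\<^sub>m d) (0\<^sub>m d d)"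

definition strang :: "real \<Rightarrow> nat \<Rightarrow> real \<Rightarrow> real \<Rightarrow> real vec \<Rightarrow> real vec" where
  "strang S d c h = lin_flow (2 * d) (MB S d c) (h / 2) \<circ> lin_flow (2 * d) (MA S d c) h
                     \<circ> lin_flow (2 * d) (MB S d c) (h / 2)"

definition vnorm :: "real vec \<Rightarrow> real" where
  "vnorm x = sqrt (\<Sum>i<dim_vec x. (x $ i)\<^sup>2)"

definition omega1 :: "real \<Rightarrow> nat \<Rightarrow> real" where
  "omega1 S d = 2 / ds S d * sin (pi / (2 * real (d + 1)))"

end

theory Submission
  imports Defs "Jordan_Normal_Form.Determinant"
begin

text \<open>Both sub-flows are explicit: \<open>\<phi>\<^sup>B\<^sub>t\<close> is the kick \<open>p \<mapsto> p + t K u\<close> with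
  \<open>K = (1 - c\<^sup>2) L - 1\<close>, and \<open>\<phi>\<^sup>A\<^sub>t\<close> rotates \<open>(u, L\<^sup>-\<^sup>1 p)\<close> with \<open>cos (c t)\<close> and
  \<open>s = sin (c t) / c\<close>. For suitable coefficients \<open>\<beta>, \<alpha>, \<gamma>\<close> the rotation \<open>\<phi>\<^sup>A\<^sub>h\<close> turns the
  quadratic form
  \<open>E(u, p) = \<beta> (-u\<cdot>L u) + \<alpha> |u|\<^sup>2 - \<gamma> (-u\<cdot>L\<^sup>-\<^sup>1 u) + s (-p\<cdot>L\<^sup>-\<^sup>1 p)\<close>
  evaluated after a kick of length \<open>h/2\<close> into the same form evaluated after a kick of length
  \<open>-h/2\<close>; hence \<open>E\<close> is conserved by \<open>\<psi>\<^sub>h\<close>.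

  Put \<open>P\<^sub>0 = cos (c h) - (h/2) s (1 - c\<^sup>2)\<close> and \<open>P\<^sub>1 = P\<^sub>0 - (h/2) s / \<omega>\<^sub>1\<^sup>2\<close>. Then
  \<open>s \<beta> = 1 - P\<^sub>0\<^sup>2\<close> and \<open>s (\<beta> \<omega>\<^sub>1\<^sup>2 + \<alpha> - \<gamma> / \<omega>\<^sub>1\<^sup>2) = \<omega>\<^sub>1\<^sup>2 (1 - P\<^sub>1\<^sup>2)\<close>, and the step-size
  condition says exactly \<open>s > 0\<close>, \<open>|P\<^sub>0| \<le> 1\<close>, \<open>|P\<^sub>1| < 1\<close> (for \<open>c > 0\<close> both are of the form
  \<open>cos x - tan \<theta> sin x = cos (x + \<theta>) / cos \<theta>\<close>). Together with the spectral bounds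
  \<open>\<omega>\<^sub>1\<^sup>2 \<le> -L \<le> 4 / \<Delta>s\<^sup>2\<close>, the lower one a discrete Wirtinger inequality, this makes \<open>E\<close>
  equivalent to \<open>|x|\<^sup>2\<close>, and a conserved quantity equivalent to the norm bounds all powers.\<close>

section \<open>Linear flows\<close>

lemma mult_mat_vec_sum:
  assumes "M \<in> carrier_mat n n" "i < n" "dim_vec v = n"
  shows "(M *\<^sub>v v) $ i = (\<Sum>j<n. M $$ (i, j) * v $ j)"
  using assms by (auto simp: scalar_prod_def row_def atLeast0LessThan)

lemma nonneg_zero_by_gronwall:
  fixes g g' :: "real \<Rightarrow> real"
  assumes deriv: "\<And>s. (g has_real_derivative g' s) (at s)"
    and growth: "\<And>s. g' s \<le> K * g s"
    and nonneg: "\<And>s. 0 \<le> g s" and start: "g 0 = 0" and t: "0 \<le> t"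
  shows "g t = 0"
proof -
  define e where "e r = g r * exp (- K * r)" for r
  have "e t \<le> e 0"
  proof (rule DERIV_nonpos_imp_nonincreasing[OF t])
    fix x
    have "(e has_real_derivative (g' x - K * g x) * exp (- K * x)) (at x)"
      unfolding e_def by (auto intro!: derivative_eq_intros deriv simp: algebra_simps)
    moreover have "(g' x - K * g x) * exp (- K * x) \<le> 0"
      using growth[of x] by (simp add: mult_nonpos_nonneg)
    ultimately show "\<exists>y. (e has_real_derivative y) (at x) \<and> y \<le> 0" by blast
  qed
  then have "g t \<le> 0" using start by (simp add: e_def mult_le_0_iff)
  with nonneg[of t] show ?thesis by simp
qed

lemma bilinear_form_le_sum_abs:
  fixes a :: "nat \<Rightarrow> nat \<Rightarrow> real" and z :: "nat \<Rightarrow> real"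
  shows "(\<Sum>i<n. \<Sum>j<n. a i j * (z i * z j)) \<le> (\<Sum>i<n. \<Sum>j<n. \<bar>a i j\<bar>) * (\<Sum>i<n. (z i)\<^sup>2)"
proof -
  have prod_le: "\<bar>z i * z j\<bar> \<le> (\<Sum>i<n. (z i)\<^sup>2)" if "i < n" "j < n" for i j
  proof -
    have "(z i)\<^sup>2 \<le> (\<Sum>i<n. (z i)\<^sup>2)" "(z j)\<^sup>2 \<le> (\<Sum>i<n. (z i)\<^sup>2)"
      using that by (auto intro!: member_le_sum)
    moreover have "2 * \<bar>z i * z j\<bar> \<le> (z i)\<^sup>2 + (z j)\<^sup>2"
      using sum_squares_bound[of "\<bar>z i\<bar>" "\<bar>z j\<bar>"] by (simp add: abs_mult power2_eq_square)
    ultimately show ?thesis by linarith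
  qed
  then have "a i j * (z i * z j) \<le> \<bar>a i j\<bar> * (\<Sum>i<n. (z i)\<^sup>2)" if "i < n" "j < n" for i j
  proof -
    have "a i j * (z i * z j) \<le> \<bar>a i j\<bar> * \<bar>z i * z j\<bar>"
      by (metis abs_ge_self abs_mult)
    also have "\<dots> \<le> \<bar>a i j\<bar> * (\<Sum>i<n. (z i)\<^sup>2)"
      using prod_le[OF that] by (simp add: mult_left_mono)
    finally show ?thesis .
  qed
  then show ?thesis by (auto simp: sum_distrib_right intro!: sum_mono)
qed

lemma linear_ode_unique:
  fixes M :: "real mat"
  assumes M: "M \<in> carrier_mat n n" and t: "0 \<le> t"
    and dX: "\<forall>s. dim_vec (X s) = n"
    and DX: "\<forall>s. \<forall>i<n. ((\<lambda>r. X r $ i) has_real_derivative (M *\<^sub>v X s) $ i) (at s)"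
    and dY: "\<forall>s. dim_vec (Y s) = n"
    and DY: "\<forall>s. \<forall>i<n. ((\<lambda>r. Y r $ i) has_real_derivative (M *\<^sub>v Y s) $ i) (at s)"
    and start: "X 0 = Y 0"
  shows "X t = Y t"
proof -
  define z where "z i r = X r $ i - Y r $ i" for i r
  have Dz: "((\<lambda>r. z i r) has_real_derivative (\<Sum>j<n. M $$ (i, j) * z j s)) (at s)"
    if "i < n" for i s
  proof -
    have "(M *\<^sub>v X s) $ i - (M *\<^sub>v Y s) $ i = (\<Sum>j<n. M $$ (i, j) * z j s)"
      using mult_mat_vec_sum[OF M that] dX dY
      by (simp add: z_def sum_subtractf[symmetric] algebra_simps)
    with DX DY that show ?thesis unfolding z_def by (metis DERIV_diff)
  qed
  define g where "g r = (\<Sum>i<n. (z i r)\<^sup>2)" for r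
  define g' where "g' s = 2 * (\<Sum>i<n. \<Sum>j<n. M $$ (i, j) * (z i s * z j s))" for s
  have "g t = 0"
  proof (rule nonneg_zero_by_gronwall[where g = g and g' = g' and K = "2 * (\<Sum>i<n. \<Sum>j<n. \<bar>M $$ (i, j)\<bar>)"])
    show "(g has_real_derivative g' s) (at s)" for s
    proof -
      have "((\<lambda>r. \<Sum>i<n. (z i r)\<^sup>2) has_real_derivative
              (\<Sum>i<n. 2 * z i s * (\<Sum>j<n. M $$ (i, j) * z j s))) (at s)"
        by (rule DERIV_sum) (use DERIV_power[OF Dz, where n = 2] in \<open>simp add: mult_ac\<close>)
      then show ?thesis
        unfolding g_def g'_def by (simp add: sum_distrib_left algebra_simps)
    qed
    show "g' s \<le> 2 * (\<Sum>i<n. \<Sum>j<n. \<bar>M $$ (i, j)\<bar>) * g s" for s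
      using bilinear_form_le_sum_abs[where a = "\<lambda>i j. M $$ (i, j)" and z = "\<lambda>i. z i s"]
      by (simp add: g_def g'_def)
    show "0 \<le> g s" for s by (simp add: g_def sum_nonneg)
    show "g 0 = 0" by (simp add: g_def z_def start)
  qed (rule t)
  then have "\<forall>i<n. z i t = 0" by (simp add: g_def sum_nonneg_eq_0_iff)
  then show ?thesis using dX dY by (intro eq_vecI) (auto simp: z_def)
qed

lemma lin_flow_eqI:
  fixes M :: "real mat"
  assumes M: "M \<in> carrier_mat n n" and t: "0 \<le> t"
    and dX: "\<forall>s. dim_vec (X s) = n"
    and DX: "\<forall>s. \<forall>i<n. ((\<lambda>r. X r $ i) has_real_derivative (M *\<^sub>v X s) $ i) (at s)"
  shows "lin_flow n M t (X 0) = X t"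
  unfolding lin_flow_def
proof (rule the_equality)
  fix y
  assume "\<exists>Y. (\<forall>s. dim_vec (Y s) = n) \<and> Y 0 = X 0 \<and>
      (\<forall>s. \<forall>i<n. ((\<lambda>r. Y r $ i) has_real_derivative (M *\<^sub>v Y s) $ i) (at s)) \<and> Y t = y"
  then show "y = X t" using linear_ode_unique[OF M t _ _ dX DX] by metis
qed (use dX DX in blast)

section \<open>The discrete Dirichlet energy\<close>

definition tridiag :: "nat \<Rightarrow> nat \<Rightarrow> real" where
  "tridiag i j = (if i = j then -2 else if i = j + 1 \<or> j = i + 1 then 1 else 0)"

text \<open>The Dirichlet energy of \<open>u\<^sub>0, \<dots>, u\<^bsub>d-1\<^esub>\<close> with boundary values \<open>u\<^bsub>-1\<^esub> = u\<^sub>d = 0\<close>.\<close>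
definition dirichlet_form :: "nat \<Rightarrow> (nat \<Rightarrow> real) \<Rightarrow> real" where
  "dirichlet_form d u = (\<Sum>m<d. (u m - (if m = 0 then 0 else u (m - 1)))\<^sup>2)
     + (if d = 0 then 0 else (u (d - 1))\<^sup>2)"

lemma tridiag_sym: "tridiag i j = tridiag j i"
  by (auto simp: tridiag_def)

lemma sum_tridiag_last_col: "(\<Sum>i<d. f i * tridiag i d) = (if d = 0 then 0 else f (d - 1))"
proof (cases d)
  case (Suc k)
  have "(\<Sum>i<k. f i * tridiag i (Suc k)) = 0" by (intro sum.neutral) (auto simp: tridiag_def)
  then show ?thesis using Suc by (simp add: tridiag_def)
qed simp

lemma sum_tridiag_last_row: "(\<Sum>j<d. tridiag d j * f j) = (if d = 0 then 0 else f (d - 1))"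
  using sum_tridiag_last_col[of "\<lambda>j. f j" d] by (simp add: tridiag_sym mult.commute)

lemma tridiag_quadratic_form: "(\<Sum>i<d. \<Sum>j<d. u i * tridiag i j * u j) = - dirichlet_form d u"
proof (induction d)
  case 0
  then show ?case by (simp add: dirichlet_form_def)
next
  case (Suc d)
  have "(\<Sum>i<Suc d. \<Sum>j<Suc d. u i * tridiag i j * u j) =
     (\<Sum>i<d. \<Sum>j<d. u i * tridiag i j * u j) + (\<Sum>i<d. u i * tridiag i d) * u d
       + u d * (\<Sum>j<d. tridiag d j * u j) + u d * tridiag d d * u d"
    by (simp add: sum.distrib sum_distrib_left sum_distrib_right algebra_simps)
  also have "\<dots> = - dirichlet_form d u + 2 * (if d = 0 then 0 else u (d - 1)) * u d - 2 * u d * u d"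
    using Suc.IH by (simp only: sum_tridiag_last_col sum_tridiag_last_row) (simp add: tridiag_def)
  also have "\<dots> = - dirichlet_form (Suc d) u"
    by (cases d) (simp_all add: dirichlet_form_def power2_eq_square algebra_simps)
  finally show ?case .
qed

lemma dirichlet_form_padded:
  fixes u :: "nat \<Rightarrow> real"
  assumes "u d = 0"
  defines "U \<equiv> \<lambda>m. if m = 0 then 0 else u (m - 1)"
  shows "dirichlet_form d u = (\<Sum>m<Suc d. (U (Suc m) - U m)\<^sup>2)"
  using assms by (cases d) (simp_all add: dirichlet_form_def U_def)

lemma sum_padded_squares:
  fixes u :: "nat \<Rightarrow> real"
  assumes "u d = 0"
  shows "(\<Sum>m<Suc (Suc d). (if m = 0 then 0 else u (m - 1))\<^sup>2) = (\<Sum>k<d. (u k)\<^sup>2)"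
  using assms by (subst sum.lessThan_Suc_shift) simp

lemma two_point_picone:
  fixes a b fa fb :: real
  assumes "0 \<le> fa" "0 \<le> fb" "a = 0 \<or> 0 < fa" "b = 0 \<or> 0 < fb"
  shows "b\<^sup>2 * (1 - fa / fb) + a\<^sup>2 * (1 - fb / fa) \<le> (b - a)\<^sup>2"
proof -
  consider "a = 0" | "b = 0" | "0 < fa" "0 < fb" using assms by auto
  then show ?thesis
  proof cases
    case 3
    have "(b - a)\<^sup>2 - (b\<^sup>2 * (1 - fa / fb) + a\<^sup>2 * (1 - fb / fa)) = (b * fa - a * fb)\<^sup>2 / (fa * fb)"
      using 3 by (simp add: field_simps power2_eq_square)
    moreover have "0 \<le> (b * fa - a * fb)\<^sup>2 / (fa * fb)" using 3 by simp
    ultimately show ?thesis by linarith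
  qed (use assms in \<open>auto simp: mult_left_le\<close>)
qed

text \<open>Picone's identity for the discrete Laplacian, applied edge by edge against the positive
  eigenvector \<open>\<phi>\<close>.\<close>
lemma discrete_picone:
  fixes U \<phi> :: "nat \<Rightarrow> real"
  assumes U0: "U 0 = 0" and UN: "U (Suc N) = 0"
    and nonneg: "\<And>m. m \<le> Suc N \<Longrightarrow> 0 \<le> \<phi> m"
    and pos: "\<And>m. 1 \<le> m \<Longrightarrow> m \<le> N \<Longrightarrow> 0 < \<phi> m"
    and eigen: "\<And>m. 1 \<le> m \<Longrightarrow> m \<le> N \<Longrightarrow> \<phi> (m - 1) + \<phi> (Suc m) = \<mu> * \<phi> m"
  shows "(2 - \<mu>) * (\<Sum>m<Suc (Suc N). (U m)\<^sup>2) \<le> (\<Sum>m<Suc N. (U (Suc m) - U m)\<^sup>2)"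
proof -
  define G where "G m = (U m)\<^sup>2 * (1 - \<phi> (m - 1) / \<phi> m)" for m
  define H where "H m = (U m)\<^sup>2 * (1 - \<phi> (Suc m) / \<phi> m)" for m
  have U_or_pos: "U m = 0 \<or> 0 < \<phi> m" if "m \<le> Suc N" for m
    using that pos[of m] U0 UN by (cases "m = 0 \<or> m = Suc N") auto
  have edge: "G (Suc m) + H m \<le> (U (Suc m) - U m)\<^sup>2" if "m < Suc N" for m
    unfolding G_def H_def using that
    by (simp add: two_point_picone nonneg U_or_pos)
  have vertex: "G m + H m = (2 - \<mu>) * (U m)\<^sup>2" if "m < Suc (Suc N)" for m
  proof (cases "m = 0 \<or> m = Suc N")
    case True
    then show ?thesis using U0 UN by (auto simp: G_def H_def)
  next
    case False
    then have "1 \<le> m" "m \<le> N" using that by auto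
    with pos eigen have "2 - (\<phi> (m - 1) + \<phi> (Suc m)) / \<phi> m = 2 - \<mu>" by force
    then show ?thesis unfolding G_def H_def by (simp add: algebra_simps add_divide_distrib)
  qed
  have "(\<Sum>m<Suc (Suc N). G m) = (\<Sum>m<Suc N. G (Suc m))"
    by (subst sum.lessThan_Suc_shift) (simp add: G_def U0)
  moreover have "(\<Sum>m<Suc (Suc N). H m) = (\<Sum>m<Suc N. H m)"
    by (simp add: H_def UN)
  ultimately have "(\<Sum>m<Suc (Suc N). G m + H m) = (\<Sum>m<Suc N. G (Suc m) + H m)"
    by (simp add: sum.distrib)
  also have "\<dots> \<le> (\<Sum>m<Suc N. (U (Suc m) - U m)\<^sup>2)"
    by (rule sum_mono) (use edge in auto)
  also have "(\<Sum>m<Suc (Suc N). G m + H m) = (2 - \<mu>) * (\<Sum>m<Suc (Suc N). (U m)\<^sup>2)"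
    unfolding sum_distrib_left by (rule sum.cong) (simp_all add: vertex)
  finally show ?thesis .
qed

lemma discrete_wirtinger:
  fixes u :: "nat \<Rightarrow> real"
  assumes ud: "u d = 0"
  shows "4 * (sin (pi / (2 * real (d + 1))))\<^sup>2 * (\<Sum>k<d. (u k)\<^sup>2) \<le> dirichlet_form d u"
proof -
  define n where "n = real (d + 1)"
  have n: "0 < n" by (simp add: n_def)
  define \<phi> where "\<phi> m = sin (pi * real m / n)" for m :: nat
  have "(2 - 2 * cos (pi / n)) * (\<Sum>m<Suc (Suc d). (if m = 0 then 0 else u (m - 1))\<^sup>2)
        \<le> dirichlet_form d u"
    unfolding dirichlet_form_padded[of u d, OF ud]
  proof (rule discrete_picone)
    show "0 \<le> \<phi> m" if "m \<le> Suc d" for m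
    proof -
      have "real m / n \<le> 1" using that by (simp add: n_def)
      then have "pi * (real m / n) \<le> pi * 1" by (intro mult_left_mono) auto
      then show ?thesis
        unfolding \<phi>_def using n by (intro sin_ge_zero) auto
    qed
    show "0 < \<phi> m" if "1 \<le> m" "m \<le> d" for m
    proof -
      have "real m / n < 1" using that by (simp add: n_def)
      then have "pi * (real m / n) < pi * 1" by (intro mult_strict_left_mono) auto
      then show ?thesis
        unfolding \<phi>_def using n that by (intro sin_gt_zero) auto
    qed
    show "\<phi> (m - 1) + \<phi> (Suc m) = 2 * cos (pi / n) * \<phi> m" if "1 \<le> m" for m
    proof -
      have "pi * real (m - 1) / n = pi * real m / n - pi / n"
        "pi * real (Suc m) / n = pi * real m / n + pi / n"
        using that n by (simp_all add: of_nat_diff field_simps)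
      then show ?thesis unfolding \<phi>_def by (simp add: sin_add sin_diff)
    qed
  qed (use ud in auto)
  moreover have "2 - 2 * cos (pi / n) = 4 * (sin (pi / (2 * n)))\<^sup>2"
    using cos_double_sin[of "pi / (2 * n)"] by simp
  ultimately show ?thesis unfolding sum_padded_squares[of u d, OF ud] by (simp add: n_def)
qed

lemma dirichlet_form_le:
  fixes u :: "nat \<Rightarrow> real"
  assumes ud: "u d = 0"
  shows "dirichlet_form d u \<le> 4 * (\<Sum>k<d. (u k)\<^sup>2)"
proof -
  define U where "U = (\<lambda>m. if m = 0 then 0 else u (m - 1))"
  have "dirichlet_form d u = (\<Sum>m<Suc d. (U (Suc m) - U m)\<^sup>2)"
    using dirichlet_form_padded[of u d, OF ud] by (simp add: U_def)
  also have "\<dots> \<le> (\<Sum>m<Suc d. 2 * (U (Suc m))\<^sup>2 + 2 * (U m)\<^sup>2)"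
    by (rule sum_mono) (smt (verit) zero_le_power2 power2_diff power2_sum)
  also have "\<dots> = 2 * (\<Sum>m<Suc d. (U (Suc m))\<^sup>2) + 2 * (\<Sum>m<Suc d. (U m)\<^sup>2)"
    by (simp add: sum.distrib sum_distrib_left)
  also have "\<dots> = 4 * (\<Sum>m<Suc (Suc d). (U m)\<^sup>2)"
  proof -
    have "(\<Sum>m<Suc (Suc d). (U m)\<^sup>2) = (\<Sum>m<Suc d. (U (Suc m))\<^sup>2)"
      by (subst sum.lessThan_Suc_shift) (simp add: U_def)
    moreover have "(\<Sum>m<Suc (Suc d). (U m)\<^sup>2) = (\<Sum>m<Suc d. (U m)\<^sup>2)"
      using ud by (simp add: U_def)
    ultimately show ?thesis by simp
  qed
  also have "\<dots> = 4 * (\<Sum>k<d. (u k)\<^sup>2)"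
    using sum_padded_squares[of u d, OF ud] by (simp add: U_def)
  finally show ?thesis .
qed

section \<open>The matrix \<open>L\<close> and its inverse\<close>

lemma real_scalar_prod_self_nonneg: "0 \<le> (v :: real vec) \<bullet> v"
  using conjugate_square_ge_0_vec[of v] by simp

lemma real_scalar_prod_self_eq_0:
  "(v :: real vec) \<in> carrier_vec n \<Longrightarrow> v \<bullet> v = 0 \<longleftrightarrow> v = 0\<^sub>v n"
  using conjugate_square_eq_0_vec[of v n] by simp

lemma scalar_prod_sum: "dim_vec w = n \<Longrightarrow> v \<bullet> w = (\<Sum>i<n. v $ i * w $ i)"
  by (auto simp: scalar_prod_def atLeast0LessThan)

lemma vnorm_eq_sqrt_scalar_prod: "vnorm x = sqrt (x \<bullet> x)"
  unfolding vnorm_def scalar_prod_def by (simp add: atLeast0LessThan power2_eq_square)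

lemma scalar_prod_expand:
  fixes x y a b :: "real vec"
  assumes "x \<in> carrier_vec d" "y \<in> carrier_vec d" "a \<in> carrier_vec d" "b \<in> carrier_vec d"
  shows "(e \<cdot>\<^sub>v x + f \<cdot>\<^sub>v y) \<bullet> (g \<cdot>\<^sub>v a + k \<cdot>\<^sub>v b) =
    e * g * (x \<bullet> a) + e * k * (x \<bullet> b) + f * g * (y \<bullet> a) + f * k * (y \<bullet> b)"
  using assms by (simp add: add_scalar_prod_distrib scalar_prod_add_distrib)

lemma mult_mat_vec_lincomb:
  fixes A :: "real mat"
  assumes "A \<in> carrier_mat d d" "a \<in> carrier_vec d" "b \<in> carrier_vec d"
  shows "A *\<^sub>v (f \<cdot>\<^sub>v a + g \<cdot>\<^sub>v b) = f \<cdot>\<^sub>v (A *\<^sub>v a) + g \<cdot>\<^sub>v (A *\<^sub>v b)"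
  using assms by (simp add: mult_add_distrib_mat_vec mult_mat_vec)

lemma ds_pos: "S > 0 \<Longrightarrow> ds S d > 0"
  by (simp add: ds_def)

lemma Lmat_carrier [simp]: "Lmat S d \<in> carrier_mat d d"
  by (simp add: Lmat_def)

lemma Lmat_dims [simp]: "dim_row (Lmat S d) = d" "dim_col (Lmat S d) = d"
  by (simp_all add: Lmat_def)

lemma Lmat_mult_vec_carrier [simp]: "Lmat S d *\<^sub>v v \<in> carrier_vec d"
  by (intro carrier_vecI) simp

lemma Lmat_index: "i < d \<Longrightarrow> j < d \<Longrightarrow> Lmat S d $$ (i, j) = tridiag i j / (ds S d)\<^sup>2"
  by (simp add: Lmat_def tridiag_def)

lemma Lmat_bilinear:
  assumes "a \<in> carrier_vec d" "b \<in> carrier_vec d"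
  shows "a \<bullet> (Lmat S d *\<^sub>v b) = (\<Sum>i<d. \<Sum>j<d. a $ i * tridiag i j * b $ j) / (ds S d)\<^sup>2"
proof -
  have "a \<bullet> (Lmat S d *\<^sub>v b) = (\<Sum>i<d. a $ i * (Lmat S d *\<^sub>v b) $ i)"
    by (rule scalar_prod_sum) simp
  also have "\<dots> = (\<Sum>i<d. a $ i * (\<Sum>j<d. tridiag i j / (ds S d)\<^sup>2 * b $ j))"
    using assms by (intro sum.cong refl)
      (simp add: mult_mat_vec_sum[of "Lmat S d" d] Lmat_index del: index_mult_mat_vec)
  finally show ?thesis by (simp add: sum_distrib_left sum_divide_distrib algebra_simps)
qed

lemma Lmat_symmetric:
  assumes "a \<in> carrier_vec d" "b \<in> carrier_vec d"
  shows "a \<bullet> (Lmat S d *\<^sub>v b) = b \<bullet> (Lmat S d *\<^sub>v a)"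
proof -
  have "(\<Sum>i<d. \<Sum>j<d. a $ i * tridiag i j * b $ j) = (\<Sum>i<d. \<Sum>j<d. b $ i * tridiag i j * a $ j)"
    by (subst sum.swap) (simp add: tridiag_sym algebra_simps)
  then show ?thesis using assms by (simp add: Lmat_bilinear)
qed

lemma Lmat_quadratic:
  assumes "u \<in> carrier_vec d"
  shows "u \<bullet> (Lmat S d *\<^sub>v u) = - dirichlet_form d (\<lambda>k. if k < d then u $ k else 0) / (ds S d)\<^sup>2"
proof -
  have "(\<Sum>i<d. \<Sum>j<d. u $ i * tridiag i j * u $ j) =
        (\<Sum>i<d. \<Sum>j<d. (if i < d then u $ i else 0) * tridiag i j * (if j < d then u $ j else 0))"
    by simp
  then show ?thesis by (simp only: Lmat_bilinear[OF assms assms] tridiag_quadratic_form)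
qed

lemma sum_squares_vec: "(u :: real vec) \<in> carrier_vec d \<Longrightarrow> (\<Sum>k<d. (if k < d then u $ k else 0)\<^sup>2) = u \<bullet> u"
  unfolding scalar_prod_def by (simp add: atLeast0LessThan power2_eq_square)

lemma omega1_sq: "(omega1 S d)\<^sup>2 = 4 * (sin (pi / (2 * real (d + 1))))\<^sup>2 / (ds S d)\<^sup>2"
  by (simp add: omega1_def power_mult_distrib power_divide)

lemma omega1_pos: assumes "S > 0" shows "omega1 S d > 0"
proof -
  have "pi / (2 * real (d + 1)) \<le> pi / 2" by (rule divide_left_mono) auto
  also have "\<dots> < pi" by simp
  finally have "sin (pi / (2 * real (d + 1))) > 0" by (intro sin_gt_zero) auto
  then show ?thesis using ds_pos[OF assms, of d] by (simp add: omega1_def)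
qed

lemma Lmat_coercive:
  assumes "S > 0" "u \<in> carrier_vec d"
  shows "(omega1 S d)\<^sup>2 * (u \<bullet> u) \<le> - (u \<bullet> (Lmat S d *\<^sub>v u))"
  using discrete_wirtinger[of "\<lambda>k. if k < d then u $ k else 0" d] ds_pos[OF assms(1), of d]
  unfolding Lmat_quadratic[OF assms(2)] omega1_sq sum_squares_vec[OF assms(2)]
  by (simp add: field_simps)

lemma Lmat_bounded:
  assumes "S > 0" "u \<in> carrier_vec d"
  shows "- (u \<bullet> (Lmat S d *\<^sub>v u)) \<le> 4 / (ds S d)\<^sup>2 * (u \<bullet> u)"
  using dirichlet_form_le[of "\<lambda>k. if k < d then u $ k else 0" d] ds_pos[OF assms(1), of d]
  unfolding Lmat_quadratic[OF assms(2)] sum_squares_vec[OF assms(2)]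
  by (simp add: field_simps)

lemma Lmat_nonpos: "S > 0 \<Longrightarrow> x \<in> carrier_vec d \<Longrightarrow> 0 \<le> - (x \<bullet> (Lmat S d *\<^sub>v x))"
  using Lmat_coercive[of S x d] real_scalar_prod_self_nonneg[of x] by (smt (verit) zero_le_mult_iff zero_le_power2)

lemma Lmat_invertible:
  assumes S: "S > 0"
  shows "\<exists>B. B \<in> carrier_mat d d \<and> Lmat S d * B = 1\<^sub>m d \<and> B * Lmat S d = 1\<^sub>m d"
proof -
  have "det (Lmat S d) \<noteq> 0"
  proof
    assume "det (Lmat S d) = 0"
    then obtain v where v: "v \<in> carrier_vec d" "v \<noteq> 0\<^sub>v d" "Lmat S d *\<^sub>v v = 0\<^sub>v d"
      using det_0_iff_vec_prod_zero[OF Lmat_carrier] by blast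
    have "(omega1 S d)\<^sup>2 * (v \<bullet> v) \<le> 0" using Lmat_coercive[OF S v(1)] v by simp
    then have "v \<bullet> v = 0"
      using omega1_pos[OF S, of d] real_scalar_prod_self_nonneg[of v]
      by (simp add: mult_le_0_iff)
    with v show False by (simp add: real_scalar_prod_self_eq_0)
  qed
  from det_non_zero_imp_unit[OF Lmat_carrier this, unfolded Units_def, of "()"]
  show ?thesis by (auto simp: ring_mat_def)
qed

lemma Linv_inverse:
  assumes S: "S > 0"
  shows "Linv S d \<in> carrier_mat d d" "Lmat S d * Linv S d = 1\<^sub>m d" "Linv S d * Lmat S d = 1\<^sub>m d"
proof -
  obtain B where B: "B \<in> carrier_mat d d" "Lmat S d * B = 1\<^sub>m d" "B * Lmat S d = 1\<^sub>m d"
    using Lmat_invertible[OF S] by blast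
  have "Linv S d = B" unfolding Linv_def
  proof (rule the_equality)
    fix C assume C: "C \<in> carrier_mat d d \<and> Lmat S d * C = 1\<^sub>m d \<and> C * Lmat S d = 1\<^sub>m d"
    then have Cc: "C \<in> carrier_mat d d" by simp
    have "C = C * (Lmat S d * B)" using B Cc by simp
    also have "\<dots> = (C * Lmat S d) * B" by (rule assoc_mult_mat[OF Cc Lmat_carrier B(1), symmetric])
    finally show "C = B" using B Cc C by simp
  qed (use B in simp)
  with B show "Linv S d \<in> carrier_mat d d" "Lmat S d * Linv S d = 1\<^sub>m d"
    "Linv S d * Lmat S d = 1\<^sub>m d" by auto
qed

lemma Linv_mult_vec_carrier [simp]: "S > 0 \<Longrightarrow> Linv S d *\<^sub>v v \<in> carrier_vec d"
  using Linv_inverse(1)[of S d] by (intro carrier_vecI) simp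

lemma Lmat_Linv_vec: "S > 0 \<Longrightarrow> v \<in> carrier_vec d \<Longrightarrow> Lmat S d *\<^sub>v (Linv S d *\<^sub>v v) = v"
  using Linv_inverse[of S d] by (simp add: assoc_mult_mat_vec[symmetric, of _ d d _ d])

lemma Linv_Lmat_vec: "S > 0 \<Longrightarrow> v \<in> carrier_vec d \<Longrightarrow> Linv S d *\<^sub>v (Lmat S d *\<^sub>v v) = v"
  using Linv_inverse[of S d] by (simp add: assoc_mult_mat_vec[symmetric, of _ d d _ d])

lemma Lmat_quadratic_expand:
  assumes x: "x \<in> carrier_vec d" and y: "y \<in> carrier_vec d"
  shows "(e \<cdot>\<^sub>v x + f \<cdot>\<^sub>v y) \<bullet> (Lmat S d *\<^sub>v (e \<cdot>\<^sub>v x + f \<cdot>\<^sub>v y)) =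
    e\<^sup>2 * (x \<bullet> (Lmat S d *\<^sub>v x)) + 2 * e * f * (x \<bullet> (Lmat S d *\<^sub>v y)) + f\<^sup>2 * (y \<bullet> (Lmat S d *\<^sub>v y))"
  unfolding mult_mat_vec_lincomb[OF Lmat_carrier x y] scalar_prod_expand[OF x y Lmat_mult_vec_carrier Lmat_mult_vec_carrier]
  using Lmat_symmetric[OF y x, of S] by (simp add: power2_eq_square)

text \<open>Take \<open>z = L w\<close> in \<open>0 \<le> -(e z + w)\<cdot>L(e z + w)\<close> and \<open>e = (ds S d)\<^sup>2/4\<close>.\<close>
lemma Lmat_square_bound:
  assumes S: "S > 0" and w: "w \<in> carrier_vec d"
  shows "(Lmat S d *\<^sub>v w) \<bullet> (Lmat S d *\<^sub>v w) \<le> 4 / (ds S d)\<^sup>2 * (- (w \<bullet> (Lmat S d *\<^sub>v w)))"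
proof -
  define z where "z = Lmat S d *\<^sub>v w"
  define K where "K = 4 / (ds S d)\<^sup>2"
  have K: "K > 0" using ds_pos[OF S, of d] by (simp add: K_def)
  have z: "z \<in> carrier_vec d" by (simp add: z_def)
  define e where "e = 1 / K"
  have "0 \<le> - ((e \<cdot>\<^sub>v z + 1 \<cdot>\<^sub>v w) \<bullet> (Lmat S d *\<^sub>v (e \<cdot>\<^sub>v z + 1 \<cdot>\<^sub>v w)))"
    using Lmat_nonpos[OF S] z w by simp
  also have "\<dots> = e\<^sup>2 * (- (z \<bullet> (Lmat S d *\<^sub>v z))) - 2 * e * (z \<bullet> z) + (- (w \<bullet> z))"
    unfolding Lmat_quadratic_expand[OF z w] using comm_scalar_prod[OF z w] by (simp add: z_def)
  also have "e\<^sup>2 * (- (z \<bullet> (Lmat S d *\<^sub>v z))) \<le> e\<^sup>2 * (K * (z \<bullet> z))"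
    using Lmat_bounded[OF S z] by (intro mult_left_mono) (auto simp: K_def)
  finally have "e * (z \<bullet> z) \<le> - (w \<bullet> z)"
    using K by (simp add: e_def power2_eq_square)
  then show ?thesis using K by (simp add: e_def z_def K_def field_simps)
qed

lemma Linv_bounds:
  assumes S: "S > 0" and u: "u \<in> carrier_vec d"
  shows "0 \<le> - (u \<bullet> (Linv S d *\<^sub>v u))"
    and "(omega1 S d)\<^sup>2 * (- (u \<bullet> (Linv S d *\<^sub>v u))) \<le> u \<bullet> u"
proof -
  define y where "y = Linv S d *\<^sub>v u"
  define w where "w = (omega1 S d)\<^sup>2"
  have y: "y \<in> carrier_vec d" using S by (simp add: y_def)
  have "u \<bullet> y = y \<bullet> (Lmat S d *\<^sub>v y)"
    using Lmat_Linv_vec[OF S u] comm_scalar_prod[OF u y] by (simp add: y_def)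
  then have co: "w * (y \<bullet> y) \<le> - (u \<bullet> y)" using Lmat_coercive[OF S y] by (simp add: w_def)
  have w0: "w > 0" using omega1_pos[OF S, of d] by (simp add: w_def)
  show "0 \<le> - (u \<bullet> (Linv S d *\<^sub>v u))"
    using co w0 real_scalar_prod_self_nonneg[of y] by (simp add: y_def) (smt (verit) mult_nonneg_nonneg)
  have "0 \<le> (1 \<cdot>\<^sub>v u + w \<cdot>\<^sub>v y) \<bullet> (1 \<cdot>\<^sub>v u + w \<cdot>\<^sub>v y)" by (rule real_scalar_prod_self_nonneg)
  also have "\<dots> = u \<bullet> u + 2 * w * (u \<bullet> y) + w\<^sup>2 * (y \<bullet> y)"
    unfolding scalar_prod_expand[OF u y u y] using comm_scalar_prod[OF y u] by (simp add: power2_eq_square)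
  also have "w\<^sup>2 * (y \<bullet> y) \<le> w * (- (u \<bullet> y))"
    using mult_left_mono[OF co, of w] w0 by (simp add: power2_eq_square mult.assoc)
  finally show "(omega1 S d)\<^sup>2 * (- (u \<bullet> (Linv S d *\<^sub>v u))) \<le> u \<bullet> u"
    by (simp add: w_def y_def algebra_simps)
qed

section \<open>The sub-flows\<close>

text \<open>\<open>osc_cos c\<close> and \<open>osc_sin c\<close> solve \<open>x'' = -c\<^sup>2 x\<close>; the case \<open>c = 0\<close> is the limit \<open>sin (c r) / c \<rightarrow> r\<close>.\<close>
definition osc_cos :: "real \<Rightarrow> real \<Rightarrow> real" where
  "osc_cos c r = cos (c * r)"

definition osc_sin :: "real \<Rightarrow> real \<Rightarrow> real" where
  "osc_sin c r = (if c = 0 then r else sin (c * r) / c)"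

lemma osc_cos_deriv: "(osc_cos c has_real_derivative - (c\<^sup>2 * osc_sin c r)) (at r)"
proof -
  have "((\<lambda>r. cos (c * r)) has_real_derivative - sin (c * r) * c) (at r)"
    by (auto intro!: derivative_eq_intros)
  moreover have "- sin (c * r) * c = - (c\<^sup>2 * osc_sin c r)"
    by (simp add: osc_sin_def power2_eq_square)
  ultimately show ?thesis by (simp add: osc_cos_def[abs_def])
qed

lemma osc_sin_deriv: "(osc_sin c has_real_derivative osc_cos c r) (at r)"
proof (cases "c = 0")
  case True
  then show ?thesis by (simp add: osc_sin_def[abs_def] osc_cos_def)
next
  case False
  have "((\<lambda>r. sin (c * r) / c) has_real_derivative cos (c * r) * c / c) (at r)"
    by (auto intro!: derivative_eq_intros)
  with False show ?thesis by (simp add: osc_sin_def[abs_def] osc_cos_def)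
qed

lemma osc_pythagoras: "(osc_cos c r)\<^sup>2 + c\<^sup>2 * (osc_sin c r)\<^sup>2 = 1"
  by (cases "c = 0") (simp_all add: osc_cos_def osc_sin_def power_divide)

lemma osc_cos_0 [simp]: "osc_cos c 0 = 1" and osc_sin_0 [simp]: "osc_sin c 0 = 0"
  by (simp_all add: osc_cos_def osc_sin_def)

definition kick_mat :: "real \<Rightarrow> nat \<Rightarrow> real \<Rightarrow> real mat" where
  "kick_mat S d c = (1 - c\<^sup>2) \<cdot>\<^sub>m Lmat S d - 1\<^sub>m d"

lemma kick_mat_carrier [simp]: "kick_mat S d c \<in> carrier_mat d d"
  by (simp add: kick_mat_def minus_carrier_mat)

lemma kick_mat_dims [simp]: "dim_row (kick_mat S d c) = d" "dim_col (kick_mat S d c) = d"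
  using carrier_matD[OF kick_mat_carrier[of S d c]] by simp_all

lemma kick_mat_mult_vec_carrier [simp]: "kick_mat S d c *\<^sub>v v \<in> carrier_vec d"
  by (intro carrier_vecI) simp

lemma zero_mat_mult_vec: "dim_vec v = m \<Longrightarrow> 0\<^sub>m n m *\<^sub>v (v :: real vec) = 0\<^sub>v n"
  by (intro eq_vecI) (auto simp: scalar_prod_def)

lemma smult_mat_mult_vec: "dim_vec v = dim_col A \<Longrightarrow> (k \<cdot>\<^sub>m A) *\<^sub>v v = k \<cdot>\<^sub>v (A *\<^sub>v (v :: real vec))"
  by (intro eq_vecI) (auto simp: scalar_prod_def sum_distrib_left mult.assoc)

lemma kick_mat_mult_vec:
  assumes "u \<in> carrier_vec d"
  shows "kick_mat S d c *\<^sub>v u = (1 - c\<^sup>2) \<cdot>\<^sub>v (Lmat S d *\<^sub>v u) + (-1) \<cdot>\<^sub>v u"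
proof -
  have "kick_mat S d c *\<^sub>v u = ((1 - c\<^sup>2) \<cdot>\<^sub>m Lmat S d) *\<^sub>v u - 1\<^sub>m d *\<^sub>v u"
    unfolding kick_mat_def by (rule minus_mult_distrib_mat_vec) (use assms in auto)
  then show ?thesis
    using assms by (intro eq_vecI) (auto simp: smult_mat_mult_vec Lmat_def)
qed

lemma MB_carrier: "MB S d c \<in> carrier_mat (2 * d) (2 * d)"
  unfolding MB_def mult_2 by (rule four_block_carrier_mat) auto

lemma MA_carrier: "S > 0 \<Longrightarrow> MA S d c \<in> carrier_mat (2 * d) (2 * d)"
  unfolding MA_def mult_2 by (rule four_block_carrier_mat) (auto simp: Linv_inverse)

lemma MB_mult_append:
  assumes "a \<in> carrier_vec d" "b \<in> carrier_vec d"
  shows "MB S d c *\<^sub>v (a @\<^sub>v b) = 0\<^sub>v d @\<^sub>v (kick_mat S d c *\<^sub>v a)"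
  unfolding MB_def kick_mat_def[symmetric] using assms
  by (subst four_block_mat_mult_vec[of _ d d]) (auto simp: zero_mat_mult_vec)

lemma MA_mult_append:
  assumes "S > 0" "a \<in> carrier_vec d" "b \<in> carrier_vec d"
  shows "MA S d c *\<^sub>v (a @\<^sub>v b) = (- (Linv S d *\<^sub>v b)) @\<^sub>v (c\<^sup>2 \<cdot>\<^sub>v (Lmat S d *\<^sub>v a))"
  unfolding MA_def using assms Linv_inverse(1)[OF assms(1), of d]
  by (subst four_block_mat_mult_vec[of _ d d]) (auto simp: zero_mat_mult_vec smult_mat_mult_vec)

lemma lincomb_vec_deriv:
  assumes "(f has_real_derivative f') (at s)" "(g has_real_derivative g') (at s)"
    and "a \<in> carrier_vec d" "b \<in> carrier_vec d" "i < d"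
  shows "((\<lambda>r. (f r \<cdot>\<^sub>v a + g r \<cdot>\<^sub>v b) $ i) has_real_derivative (f' \<cdot>\<^sub>v a + g' \<cdot>\<^sub>v b) $ i) (at s)"
  using assms by (auto intro!: derivative_eq_intros)

lemma append_solves:
  fixes U P U' P' :: "real \<Rightarrow> real vec"
  assumes U: "\<And>s. U s \<in> carrier_vec d" and P: "\<And>s. P s \<in> carrier_vec d"
    and U': "\<And>s. U' s \<in> carrier_vec d" and P': "\<And>s. P' s \<in> carrier_vec d"
    and DU: "\<And>s i. i < d \<Longrightarrow> ((\<lambda>r. U r $ i) has_real_derivative U' s $ i) (at s)"
    and DP: "\<And>s i. i < d \<Longrightarrow> ((\<lambda>r. P r $ i) has_real_derivative P' s $ i) (at s)"
    and M: "\<And>s. M *\<^sub>v (U s @\<^sub>v P s) = U' s @\<^sub>v P' s"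
  shows "\<forall>s. \<forall>i<2 * d. ((\<lambda>r. (U r @\<^sub>v P r) $ i) has_real_derivative (M *\<^sub>v (U s @\<^sub>v P s)) $ i) (at s)"
proof (intro allI impI)
  fix s i assume i: "i < 2 * d"
  have [simp]: "dim_vec (U r) = d" "dim_vec (P r) = d" for r using U[of r] P[of r] by auto
  have "(\<lambda>r. (U r @\<^sub>v P r) $ i) = (\<lambda>r. if i < d then U r $ i else P r $ (i - d))"
    using i by (auto simp: mult_2)
  moreover have "(M *\<^sub>v (U s @\<^sub>v P s)) $ i = (if i < d then U' s $ i else P' s $ (i - d))"
    unfolding M using i U'[of s] P'[of s] by (auto simp: mult_2)
  ultimately show "((\<lambda>r. (U r @\<^sub>v P r) $ i) has_real_derivative (M *\<^sub>v (U s @\<^sub>v P s)) $ i) (at s)"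
    using DU DP i by (cases "i < d") auto
qed

lemma lin_flow_MB:
  assumes u: "u \<in> carrier_vec d" and p: "p \<in> carrier_vec d" and t: "0 \<le> t"
  shows "lin_flow (2 * d) (MB S d c) t (u @\<^sub>v p) = u @\<^sub>v (p + t \<cdot>\<^sub>v (kick_mat S d c *\<^sub>v u))"
proof -
  define k where "k = kick_mat S d c *\<^sub>v u"
  have k: "k \<in> carrier_vec d" by (simp add: k_def)
  define X where "X s = u @\<^sub>v (1 \<cdot>\<^sub>v p + s \<cdot>\<^sub>v k)" for s
  have "lin_flow (2 * d) (MB S d c) t (X 0) = X t"
  proof (rule lin_flow_eqI[OF MB_carrier t])
    show "\<forall>s. dim_vec (X s) = 2 * d" using u p k by (simp add: X_def mult_2)
    show "\<forall>s. \<forall>i<2 * d. ((\<lambda>r. X r $ i) has_real_derivative (MB S d c *\<^sub>v X s) $ i) (at s)"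
      unfolding X_def
    proof (rule append_solves[where U' = "\<lambda>_. 0\<^sub>v d" and P' = "\<lambda>_. k"])
      show "((\<lambda>r. (1 \<cdot>\<^sub>v p + r \<cdot>\<^sub>v k) $ i) has_real_derivative k $ i) (at s)" if "i < d" for s i
        using lincomb_vec_deriv[where f = "\<lambda>_. 1" and f' = 0 and g = "\<lambda>r. r" and g' = 1, OF _ _ p k that]
        using p k that by simp
      show "MB S d c *\<^sub>v (u @\<^sub>v (1 \<cdot>\<^sub>v p + s \<cdot>\<^sub>v k)) = 0\<^sub>v d @\<^sub>v k" for s
        using u p k by (simp add: MB_mult_append k_def)
    qed (use u p k in auto)
  qed
  moreover have "X 0 = u @\<^sub>v p" using p k by (auto simp: X_def intro!: eq_vecI)
  ultimately show ?thesis by (simp add: X_def k_def)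
qed

lemma lin_flow_MA:
  assumes S: "S > 0" and u: "u \<in> carrier_vec d" and p: "p \<in> carrier_vec d" and t: "0 \<le> t"
  shows "lin_flow (2 * d) (MA S d c) t (u @\<^sub>v p) =
     (osc_cos c t \<cdot>\<^sub>v u + (- osc_sin c t) \<cdot>\<^sub>v (Linv S d *\<^sub>v p)) @\<^sub>v
     ((c\<^sup>2 * osc_sin c t) \<cdot>\<^sub>v (Lmat S d *\<^sub>v u) + osc_cos c t \<cdot>\<^sub>v p)"
proof -
  define w where "w = Linv S d *\<^sub>v p"
  define l where "l = Lmat S d *\<^sub>v u"
  have w: "w \<in> carrier_vec d" and l: "l \<in> carrier_vec d" using S by (auto simp: w_def l_def)
  have Lw: "Lmat S d *\<^sub>v w = p" and Nl: "Linv S d *\<^sub>v l = u"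
    using Lmat_Linv_vec[OF S p] Linv_Lmat_vec[OF S u] by (simp_all add: w_def l_def)
  define U where "U s = osc_cos c s \<cdot>\<^sub>v u + (- osc_sin c s) \<cdot>\<^sub>v w" for s
  define P where "P s = (c\<^sup>2 * osc_sin c s) \<cdot>\<^sub>v l + osc_cos c s \<cdot>\<^sub>v p" for s
  define U' where "U' s = (- (c\<^sup>2 * osc_sin c s)) \<cdot>\<^sub>v u + (- osc_cos c s) \<cdot>\<^sub>v w" for s
  define P' where "P' s = (c\<^sup>2 * osc_cos c s) \<cdot>\<^sub>v l + (- (c\<^sup>2 * osc_sin c s)) \<cdot>\<^sub>v p" for s
  have carrier: "U s \<in> carrier_vec d" "P s \<in> carrier_vec d" "U' s \<in> carrier_vec d" "P' s \<in> carrier_vec d"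
    for s using u w l p by (auto simp: U_def P_def U'_def P'_def)
  have "lin_flow (2 * d) (MA S d c) t (U 0 @\<^sub>v P 0) = U t @\<^sub>v P t"
  proof (rule lin_flow_eqI[OF MA_carrier[OF S] t, where X = "\<lambda>s. U s @\<^sub>v P s"])
    show "\<forall>s. dim_vec (U s @\<^sub>v P s) = 2 * d" using carrier(1,2) by (metis carrier_vecD index_append_vec(2) mult_2)
    show "\<forall>s. \<forall>i<2 * d. ((\<lambda>r. (U r @\<^sub>v P r) $ i) has_real_derivative
        (MA S d c *\<^sub>v (U s @\<^sub>v P s)) $ i) (at s)"
    proof (rule append_solves[where U' = U' and P' = P'])
      show "((\<lambda>r. U r $ i) has_real_derivative U' s $ i) (at s)" if "i < d" for s i
        unfolding U_def U'_def
        by (rule lincomb_vec_deriv[OF osc_cos_deriv _ u w that])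
          (auto intro!: derivative_eq_intros osc_sin_deriv)
      show "((\<lambda>r. P r $ i) has_real_derivative P' s $ i) (at s)" if "i < d" for s i
        unfolding P_def P'_def
        by (rule lincomb_vec_deriv[OF _ osc_cos_deriv l p that])
          (auto intro!: derivative_eq_intros osc_sin_deriv)
      show "MA S d c *\<^sub>v (U s @\<^sub>v P s) = U' s @\<^sub>v P' s" for s
      proof -
        have "Linv S d *\<^sub>v P s = (c\<^sup>2 * osc_sin c s) \<cdot>\<^sub>v u + osc_cos c s \<cdot>\<^sub>v w"
          unfolding P_def mult_mat_vec_lincomb[OF Linv_inverse(1)[OF S] l p] Nl w_def ..
        moreover have "Lmat S d *\<^sub>v U s = osc_cos c s \<cdot>\<^sub>v l + (- osc_sin c s) \<cdot>\<^sub>v p"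
          unfolding U_def mult_mat_vec_lincomb[OF Lmat_carrier u w] Lw l_def ..
        ultimately show ?thesis
          using u w l p carrier(1,2)
          by (auto simp: MA_mult_append[OF S] U'_def P'_def algebra_simps intro!: eq_vecI)
      qed
    qed (use carrier in auto)
  qed
  moreover have "U 0 = u" "P 0 = p" using u w l p by (auto simp: U_def P_def intro!: eq_vecI)
  ultimately show ?thesis by (simp add: U_def P_def w_def l_def)
qed

lemma strang_append:
  fixes c :: real
  assumes S: "S > 0" and h: "h > 0" and u: "u \<in> carrier_vec d" and p: "p \<in> carrier_vec d"
  defines "p1 \<equiv> p + (h / 2) \<cdot>\<^sub>v (kick_mat S d c *\<^sub>v u)"
  defines "u2 \<equiv> osc_cos c h \<cdot>\<^sub>v u + (- osc_sin c h) \<cdot>\<^sub>v (Linv S d *\<^sub>v p1)"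
  defines "p2 \<equiv> (c\<^sup>2 * osc_sin c h) \<cdot>\<^sub>v (Lmat S d *\<^sub>v u) + osc_cos c h \<cdot>\<^sub>v p1"
  shows "strang S d c h (u @\<^sub>v p) = u2 @\<^sub>v (p2 + (h / 2) \<cdot>\<^sub>v (kick_mat S d c *\<^sub>v u2))"
proof -
  have p1: "p1 \<in> carrier_vec d" and u2: "u2 \<in> carrier_vec d" and p2: "p2 \<in> carrier_vec d"
    using u p S by (simp_all add: p1_def u2_def p2_def)
  show ?thesis
    using h unfolding strang_def
    by (simp add: lin_flow_MB[OF u p] lin_flow_MA[OF S u p1] lin_flow_MB[OF u2 p2]
        p1_def[symmetric] u2_def[symmetric] p2_def[symmetric])
qed

section \<open>A conserved quadratic energy\<close>

text \<open>With \<open>w = L\<^sup>-\<^sup>1 p\<close>, the term \<open>- q (w \<cdot> L w)\<close> equals \<open>- q (p \<cdot> L\<^sup>-\<^sup>1 p)\<close>.\<close>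
definition quad_energy ::
    "real \<Rightarrow> nat \<Rightarrow> real \<Rightarrow> real \<Rightarrow> real \<Rightarrow> real \<Rightarrow> real vec \<Rightarrow> real vec \<Rightarrow> real" where
  "quad_energy S d \<beta> \<alpha> \<gamma> q u p =
     - \<beta> * (u \<bullet> (Lmat S d *\<^sub>v u)) + \<alpha> * (u \<bullet> u) + \<gamma> * (u \<bullet> (Linv S d *\<^sub>v u))
     - q * ((Linv S d *\<^sub>v p) \<bullet> (Lmat S d *\<^sub>v (Linv S d *\<^sub>v p)))"

text \<open>The energy at \<open>(u, L w + \<tau> K u)\<close>, where \<open>K = a L - 1\<close> is the kick matrix for \<open>a = 1 - c\<^sup>2\<close>.\<close>
definition kicked_energy ::
    "real \<Rightarrow> nat \<Rightarrow> real \<Rightarrow> real \<Rightarrow> real \<Rightarrow> real \<Rightarrow> real \<Rightarrow> real \<Rightarrow> real vec \<Rightarrow> real vec \<Rightarrow> real" where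
  "kicked_energy S d \<beta> \<alpha> \<gamma> q a \<tau> u w =
     - (\<beta> + q * \<tau>\<^sup>2 * a\<^sup>2) * (u \<bullet> (Lmat S d *\<^sub>v u)) + (\<alpha> + 2 * q * \<tau>\<^sup>2 * a) * (u \<bullet> u)
     + (\<gamma> - q * \<tau>\<^sup>2) * (u \<bullet> (Linv S d *\<^sub>v u)) - q * (w \<bullet> (Lmat S d *\<^sub>v w))
     - 2 * q * \<tau> * (a * (w \<bullet> (Lmat S d *\<^sub>v u)) - w \<bullet> u)"

lemma quad_energy_kick:
  assumes S: "S > 0" and u: "u \<in> carrier_vec d" and p: "p \<in> carrier_vec d"
  shows "quad_energy S d \<beta> \<alpha> \<gamma> q u (p + \<tau> \<cdot>\<^sub>v (kick_mat S d c *\<^sub>v u)) =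
    kicked_energy S d \<beta> \<alpha> \<gamma> q (1 - c\<^sup>2) \<tau> u (Linv S d *\<^sub>v p)"
proof -
  define a where "a = 1 - c\<^sup>2"
  define L where "L = Lmat S d"
  define N where "N = Linv S d"
  have Lc: "L \<in> carrier_mat d d" and Nc: "N \<in> carrier_mat d d"
    using Linv_inverse(1)[OF S] by (simp_all add: L_def N_def)
  define w where "w = N *\<^sub>v p"
  define v where "v = N *\<^sub>v u"
  have w: "w \<in> carrier_vec d" and v: "v \<in> carrier_vec d" and Lu: "L *\<^sub>v u \<in> carrier_vec d"
    using S by (simp_all add: w_def v_def N_def L_def)
  define z where "z = a \<cdot>\<^sub>v u + (-1) \<cdot>\<^sub>v v"
  have z: "z \<in> carrier_vec d" using u v by (simp add: z_def)
  have Lv: "L *\<^sub>v v = u" and NLu: "N *\<^sub>v (L *\<^sub>v u) = u"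
    using Lmat_Linv_vec[OF S u] Linv_Lmat_vec[OF S u] by (simp_all add: L_def v_def N_def)
  have Ku: "kick_mat S d c *\<^sub>v u = a \<cdot>\<^sub>v (L *\<^sub>v u) + (-1) \<cdot>\<^sub>v u"
    using kick_mat_mult_vec[OF u] by (simp add: a_def L_def)
  have "N *\<^sub>v (p + \<tau> \<cdot>\<^sub>v (kick_mat S d c *\<^sub>v u)) = 1 \<cdot>\<^sub>v w + \<tau> \<cdot>\<^sub>v z"
    using p unfolding w_def mult_mat_vec_lincomb[OF Nc p kick_mat_mult_vec_carrier, of 1 \<tau>, simplified]
    unfolding Ku mult_mat_vec_lincomb[OF Nc Lu u] NLu v_def z_def by simp
  then have kicked: "N *\<^sub>v (p + \<tau> \<cdot>\<^sub>v (kick_mat S d c *\<^sub>v u)) = \<tau> \<cdot>\<^sub>v z + 1 \<cdot>\<^sub>v w"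
    using z w by (simp add: comm_add_vec)
  have Lz: "L *\<^sub>v z = a \<cdot>\<^sub>v (L *\<^sub>v u) + (-1) \<cdot>\<^sub>v u"
    unfolding z_def mult_mat_vec_lincomb[OF Lc u v] Lv ..
  have zLz: "z \<bullet> (L *\<^sub>v z) = a\<^sup>2 * (u \<bullet> (L *\<^sub>v u)) - 2 * a * (u \<bullet> u) + u \<bullet> v"
  proof -
    have "v \<bullet> (L *\<^sub>v u) = u \<bullet> u" using Lmat_symmetric[OF v u] Lv by (simp add: L_def)
    moreover have "v \<bullet> u = u \<bullet> v" by (rule comm_scalar_prod[OF v u])
    ultimately show ?thesis
      unfolding Lz unfolding z_def scalar_prod_expand[OF u v Lu u] by (simp add: power2_eq_square)
  qed
  have zLw: "z \<bullet> (L *\<^sub>v w) = a * (w \<bullet> (L *\<^sub>v u)) - w \<bullet> u"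
  proof -
    have "z \<bullet> (L *\<^sub>v w) = w \<bullet> (L *\<^sub>v z)" using Lmat_symmetric[OF z w] by (simp add: L_def)
    also have "\<dots> = a * (w \<bullet> (L *\<^sub>v u)) - w \<bullet> u"
      unfolding Lz using w u Lu by (simp add: scalar_prod_add_distrib[of _ d])
    finally show ?thesis .
  qed
  show ?thesis
    unfolding quad_energy_def kicked_energy_def N_def[symmetric] L_def[symmetric] kicked
      Lmat_quadratic_expand[OF z w, where S = S, folded L_def] zLz zLw
    by (simp add: a_def v_def w_def algebra_simps power2_eq_square)
qed

text \<open>In the coordinates \<open>w = L\<^sup>-\<^sup>1 p\<close> the A-flow is the rotation below with \<open>k = c\<^sup>2\<close>.\<close>
lemma kicked_energy_rotation:
  assumes u: "u \<in> carrier_vec d" and w: "w \<in> carrier_vec d"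
    and pyth: "C\<^sup>2 + k * s\<^sup>2 = 1"
    and \<beta>: "\<beta> = k * s + 2 * C * t * a - s * t\<^sup>2 * a\<^sup>2" and \<alpha>: "\<alpha> = 2 * t * C - 2 * s * t\<^sup>2 * a"
    and \<gamma>: "\<gamma> = s * t\<^sup>2"
  shows "kicked_energy S d \<beta> \<alpha> \<gamma> s a t (C \<cdot>\<^sub>v u + (-s) \<cdot>\<^sub>v w) ((k * s) \<cdot>\<^sub>v u + C \<cdot>\<^sub>v w) =
    kicked_energy S d \<beta> \<alpha> \<gamma> s a (-t) u w"
proof -
  define L where "L = Lmat S d"
  have Lc: "L \<in> carrier_mat d d" and Lu: "L *\<^sub>v u \<in> carrier_vec d" and Lw: "L *\<^sub>v w \<in> carrier_vec d"
    by (simp_all add: L_def)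
  have s1: "w \<bullet> (L *\<^sub>v u) = u \<bullet> (L *\<^sub>v w)" using Lmat_symmetric[OF w u] by (simp add: L_def)
  have s2: "w \<bullet> u = u \<bullet> w" by (rule comm_scalar_prod[OF w u])
  define u' where "u' = C \<cdot>\<^sub>v u + (-s) \<cdot>\<^sub>v w"
  define w' where "w' = (k * s) \<cdot>\<^sub>v u + C \<cdot>\<^sub>v w"
  note expand = scalar_prod_expand[OF u w Lu Lw] scalar_prod_expand[OF u w u w]
  have Lu': "L *\<^sub>v u' = C \<cdot>\<^sub>v (L *\<^sub>v u) + (-s) \<cdot>\<^sub>v (L *\<^sub>v w)"
    and Lw': "L *\<^sub>v w' = (k * s) \<cdot>\<^sub>v (L *\<^sub>v u) + C \<cdot>\<^sub>v (L *\<^sub>v w)"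
    unfolding u'_def w'_def by (rule mult_mat_vec_lincomb[OF Lc u w])+
  define Z where "Z = s * (w \<bullet> (L *\<^sub>v w)) - 2 * t * C * (u \<bullet> u) + (k * s + 2 * C * a * t) * (u \<bullet> (L *\<^sub>v u))
    + 2 * s * t * (u \<bullet> w) - 2 * a * s * t * (u \<bullet> (L *\<^sub>v w))"
  have "kicked_energy S d \<beta> \<alpha> \<gamma> s a t u' w' - kicked_energy S d \<beta> \<alpha> \<gamma> s a (-t) u w
      = (1 - (C * C + k * (s * s))) * Z"
    unfolding kicked_energy_def L_def[symmetric] Lu' Lw' unfolding u'_def w'_def expand s1 s2 \<beta> \<alpha> \<gamma> Z_def
    by (simp add: algebra_simps power2_eq_square)
  with pyth show ?thesis by (simp add: u'_def w'_def power2_eq_square)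
qed

lemma vec_first_last_of_append:
  assumes "u \<in> carrier_vec d" "(p :: 'a vec) \<in> carrier_vec n"
  shows "vec_first (u @\<^sub>v p) d = u" "vec_last (u @\<^sub>v p) n = p"
  using assms by (auto intro!: eq_vecI simp: vec_first_def vec_last_def)

text \<open>The coefficients are those for which the rotation \<open>\<phi>\<^sup>A\<^sub>h\<close> maps the kicked energy at
  \<open>\<tau> = h/2\<close> to the kicked energy at \<open>\<tau> = -h/2\<close>, see \<open>kicked_energy_rotation\<close>.\<close>
definition strang_energy :: "real \<Rightarrow> nat \<Rightarrow> real \<Rightarrow> real \<Rightarrow> real vec \<Rightarrow> real" where
  "strang_energy S d c h x =
    (let C = osc_cos c h; s = osc_sin c h; t = h / 2; a = 1 - c\<^sup>2
     in quad_energy S d (c\<^sup>2 * s + 2 * C * t * a - s * t\<^sup>2 * a\<^sup>2) (2 * t * C - 2 * s * t\<^sup>2 * a) (s * t\<^sup>2) s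
          (vec_first x d) (vec_last x d))"

lemma quad_energy_kick_rotate_kick:
  fixes c C s t :: real
  assumes S: "S > 0" and u: "u \<in> carrier_vec d" and p: "p \<in> carrier_vec d"
    and pyth: "C\<^sup>2 + c\<^sup>2 * s\<^sup>2 = 1"
  defines "E \<equiv> quad_energy S d (c\<^sup>2 * s + 2 * C * t * (1 - c\<^sup>2) - s * t\<^sup>2 * (1 - c\<^sup>2)\<^sup>2)
    (2 * t * C - 2 * s * t\<^sup>2 * (1 - c\<^sup>2)) (s * t\<^sup>2) s"
  defines "p1 \<equiv> p + t \<cdot>\<^sub>v (kick_mat S d c *\<^sub>v u)"
  defines "u2 \<equiv> C \<cdot>\<^sub>v u + (- s) \<cdot>\<^sub>v (Linv S d *\<^sub>v p1)"
    and "p2 \<equiv> (c\<^sup>2 * s) \<cdot>\<^sub>v (Lmat S d *\<^sub>v u) + C \<cdot>\<^sub>v p1"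
  shows "E u2 (p2 + t \<cdot>\<^sub>v (kick_mat S d c *\<^sub>v u2)) = E u p"
proof -
  define F where "F = kicked_energy S d (c\<^sup>2 * s + 2 * C * t * (1 - c\<^sup>2) - s * t\<^sup>2 * (1 - c\<^sup>2)\<^sup>2)
    (2 * t * C - 2 * s * t\<^sup>2 * (1 - c\<^sup>2)) (s * t\<^sup>2) s (1 - c\<^sup>2)"
  define w1 where "w1 = Linv S d *\<^sub>v p1"
  have p1: "p1 \<in> carrier_vec d" and w1: "w1 \<in> carrier_vec d" and u2: "u2 \<in> carrier_vec d"
    and p2: "p2 \<in> carrier_vec d" using S u p by (simp_all add: p1_def w1_def u2_def p2_def)
  have w2: "Linv S d *\<^sub>v p2 = (c\<^sup>2 * s) \<cdot>\<^sub>v u + C \<cdot>\<^sub>v w1"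
    unfolding p2_def mult_mat_vec_lincomb[OF Linv_inverse(1)[OF S] Lmat_mult_vec_carrier p1]
      Linv_Lmat_vec[OF S u] w1_def ..
  have "E u2 (p2 + t \<cdot>\<^sub>v (kick_mat S d c *\<^sub>v u2)) = F t u2 (Linv S d *\<^sub>v p2)"
    unfolding E_def F_def by (rule quad_energy_kick[OF S u2 p2])
  also have "\<dots> = F (- t) u w1"
    unfolding F_def u2_def w2 w1_def[symmetric]
    by (rule kicked_energy_rotation[OF u w1 pyth]) simp_all
  also have "\<dots> = E u (p1 + (- t) \<cdot>\<^sub>v (kick_mat S d c *\<^sub>v u))"
    unfolding E_def F_def w1_def by (rule quad_energy_kick[OF S u p1, symmetric])
  also have "p1 + (- t) \<cdot>\<^sub>v (kick_mat S d c *\<^sub>v u) = p"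
    using p by (auto simp: p1_def intro!: eq_vecI)
  finally show ?thesis .
qed

lemma strang_energy_invariant:
  fixes c :: real
  assumes S: "S > 0" and h: "h > 0" and x: "x \<in> carrier_vec (2 * d)"
  shows "strang S d c h x \<in> carrier_vec (2 * d) \<and> strang_energy S d c h (strang S d c h x) = strang_energy S d c h x"
proof -
  define u where "u = vec_first x d"
  define p where "p = vec_last x d"
  have u: "u \<in> carrier_vec d" and p: "p \<in> carrier_vec d" by (simp_all add: u_def p_def)
  have x_split: "x = u @\<^sub>v p" using x by (simp add: u_def p_def mult_2)
  define p1 where "p1 = p + (h / 2) \<cdot>\<^sub>v (kick_mat S d c *\<^sub>v u)"
  define u2 where "u2 = osc_cos c h \<cdot>\<^sub>v u + (- osc_sin c h) \<cdot>\<^sub>v (Linv S d *\<^sub>v p1)"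
  define p3 where "p3 = (c\<^sup>2 * osc_sin c h) \<cdot>\<^sub>v (Lmat S d *\<^sub>v u) + osc_cos c h \<cdot>\<^sub>v p1
    + (h / 2) \<cdot>\<^sub>v (kick_mat S d c *\<^sub>v u2)"
  have u2: "u2 \<in> carrier_vec d" and p3: "p3 \<in> carrier_vec d"
    using S u p by (simp_all add: p1_def u2_def p3_def)
  have step: "strang S d c h x = u2 @\<^sub>v p3"
    unfolding x_split p3_def u2_def p1_def by (rule strang_append[OF S h u p])
  show ?thesis
  proof
    show "strang S d c h x \<in> carrier_vec (2 * d)"
      unfolding step mult_2 by (rule append_carrier_vec[OF u2 p3])
    show "strang_energy S d c h (strang S d c h x) = strang_energy S d c h x"
      unfolding step strang_energy_def Let_def vec_first_last_of_append[OF u2 p3]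
      unfolding u2_def p3_def p1_def u_def[symmetric] p_def[symmetric]
      by (rule quad_energy_kick_rotate_kick[OF S u p osc_pythagoras])
  qed
qed

section \<open>The step-size condition\<close>

lemma abs_cos_sub_tan_mult_sin_less_1:
  fixes x \<theta> :: real
  assumes x: "0 < x" and \<theta>: "0 \<le> \<theta>" "\<theta> < pi / 2" and sum: "x + 2 * \<theta> < pi"
  shows "\<bar>cos x - tan \<theta> * sin x\<bar> < 1"
proof -
  have c: "cos \<theta> > 0" using \<theta> by (intro cos_gt_zero_pi) auto
  have e: "cos x - tan \<theta> * sin x = cos (x + \<theta>) / cos \<theta>"
    using c by (simp add: cos_add tan_def field_simps)
  have "cos (x + \<theta>) < cos \<theta>"
    by (rule cos_monotone_0_pi) (use x \<theta> sum in auto)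
  moreover have "cos (pi - \<theta>) < cos (x + \<theta>)"
    by (rule cos_monotone_0_pi) (use x \<theta> sum in auto)
  ultimately show ?thesis using c unfolding e by (simp add: abs_less_iff field_simps)
qed

lemma abs_cos_sub_mult_sin_less_1:
  fixes x T :: real
  assumes "0 < x" "0 \<le> T" "x + 2 * arctan T < pi"
  shows "\<bar>cos x - T * sin x\<bar> < 1"
  using abs_cos_sub_tan_mult_sin_less_1[of x "arctan T"] assms arctan_ubound[of T]
    arctan_monotone'[of 0 T] by (simp add: tan_arctan)

lemma verlet_step_size_bounds:
  fixes h \<omega> :: real
  assumes h: "h > 0" and \<omega>: "\<omega> > 0" and step: "h < 2 * \<omega> / sqrt (1 + \<omega>\<^sup>2)"
  shows "\<bar>1 - h / 2 * h\<bar> \<le> 1" and "\<bar>1 - h / 2 * h * (1 + 1 / \<omega>\<^sup>2)\<bar> < 1"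
proof -
  have pos: "0 < 1 + \<omega>\<^sup>2" by (simp add: add_pos_nonneg)
  then have "h * sqrt (1 + \<omega>\<^sup>2) < 2 * \<omega>"
    using step by (simp add: field_simps)
  then have "(h * sqrt (1 + \<omega>\<^sup>2))\<^sup>2 < (2 * \<omega>)\<^sup>2"
    using h pos by (intro power_strict_mono) auto
  then have hs: "h\<^sup>2 * (1 + \<omega>\<^sup>2) < 4 * \<omega>\<^sup>2"
    using pos by (simp add: power_mult_distrib)
  then have "h\<^sup>2 * (1 + \<omega>\<^sup>2) < 4 * (1 + \<omega>\<^sup>2)" by simp
  then have "h\<^sup>2 < 4" using pos mult_less_cancel_right_pos[of "1 + \<omega>\<^sup>2" "h\<^sup>2" 4] by simp
  then show "\<bar>1 - h / 2 * h\<bar> \<le> 1" by (simp add: power2_eq_square abs_le_iff)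
  have "h\<^sup>2 * (1 + 1 / \<omega>\<^sup>2) = h\<^sup>2 * (1 + \<omega>\<^sup>2) / \<omega>\<^sup>2"
    using \<omega> by (simp add: field_simps)
  then have "h\<^sup>2 * (1 + 1 / \<omega>\<^sup>2) < 4"
    using hs \<omega> by (simp add: divide_less_eq)
  moreover have "0 < h\<^sup>2 * (1 + 1 / \<omega>\<^sup>2)"
    using h \<omega> by (simp add: add_pos_nonneg)
  ultimately show "\<bar>1 - h / 2 * h * (1 + 1 / \<omega>\<^sup>2)\<bar> < 1"
    by (simp add: power2_eq_square abs_less_iff)
qed

text \<open>With \<open>x = c h\<close>, both quantities have the form \<open>cos x - T sin x\<close> with
  \<open>x + 2 arctan T < \<pi>\<close>.\<close>
lemma rotation_step_size_bounds:
  fixes c h \<omega> :: real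
  assumes c: "0 < c" "c \<le> 1" and h: "h > 0" and \<omega>: "\<omega> > 0"
    and step: "c * h + 2 * arctan (h * (1 + (1 - c\<^sup>2) * \<omega>\<^sup>2) / (2 * c * \<omega>\<^sup>2)) < pi"
  shows "osc_sin c h > 0"
    and "\<bar>osc_cos c h - h / 2 * osc_sin c h * (1 - c\<^sup>2)\<bar> \<le> 1"
    and "\<bar>osc_cos c h - h / 2 * osc_sin c h * (1 - c\<^sup>2 + 1 / \<omega>\<^sup>2)\<bar> < 1"
proof -
  define x where "x = c * h"
  define T0 where "T0 = h * (1 - c\<^sup>2) / (2 * c)"
  define T1 where "T1 = h * (1 - c\<^sup>2 + 1 / \<omega>\<^sup>2) / (2 * c)"
  have x: "0 < x" using c h by (simp add: x_def)
  have T0: "0 \<le> T0" using c h by (simp add: T0_def power_le_one)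
  have T01: "T0 \<le> T1" using c h \<omega> by (simp add: T0_def T1_def divide_right_mono)
  have "h * (1 + (1 - c\<^sup>2) * \<omega>\<^sup>2) / (2 * c * \<omega>\<^sup>2) = T1"
    using c \<omega> by (simp add: T1_def field_simps)
  then have sum1: "x + 2 * arctan T1 < pi" using step by (simp add: x_def)
  then have sum0: "x + 2 * arctan T0 < pi" using arctan_monotone'[OF T01] by simp
  have "0 \<le> arctan T0" using arctan_monotone'[OF T0] by simp
  then have "x < pi" using sum0 by linarith
  then show "osc_sin c h > 0" using x c by (simp add: osc_sin_def x_def sin_gt_zero)
  have "h / 2 * osc_sin c h * (1 - c\<^sup>2) = T0 * sin x"
    and "h / 2 * osc_sin c h * (1 - c\<^sup>2 + 1 / \<omega>\<^sup>2) = T1 * sin x"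
    using c by (simp_all add: osc_sin_def x_def T0_def T1_def field_simps)
  then show "\<bar>osc_cos c h - h / 2 * osc_sin c h * (1 - c\<^sup>2)\<bar> \<le> 1"
    and "\<bar>osc_cos c h - h / 2 * osc_sin c h * (1 - c\<^sup>2 + 1 / \<omega>\<^sup>2)\<bar> < 1"
    using abs_cos_sub_mult_sin_less_1[OF x T0 sum0] abs_cos_sub_mult_sin_less_1[OF x _ sum1] T0 T01
    by (simp_all add: osc_cos_def x_def)
qed

lemma step_size_condition_bounds:
  fixes c h \<omega> :: real
  assumes c: "0 \<le> c" "c \<le> 1" and h: "h > 0" and \<omega>: "\<omega> > 0"
    and cpos: "c > 0 \<Longrightarrow> c * h + 2 * arctan (h * (1 + (1 - c\<^sup>2) * \<omega>\<^sup>2) / (2 * c * \<omega>\<^sup>2)) < pi"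
    and czero: "c = 0 \<Longrightarrow> h < 2 * \<omega> / sqrt (1 + \<omega>\<^sup>2)"
  shows "osc_sin c h > 0"
    and "\<bar>osc_cos c h - h / 2 * osc_sin c h * (1 - c\<^sup>2)\<bar> \<le> 1"
    and "\<bar>osc_cos c h - h / 2 * osc_sin c h * (1 - c\<^sup>2 + 1 / \<omega>\<^sup>2)\<bar> < 1"
proof -
  consider "c = 0" | "c > 0" using c by linarith
  then have "osc_sin c h > 0 \<and> \<bar>osc_cos c h - h / 2 * osc_sin c h * (1 - c\<^sup>2)\<bar> \<le> 1 \<and>
    \<bar>osc_cos c h - h / 2 * osc_sin c h * (1 - c\<^sup>2 + 1 / \<omega>\<^sup>2)\<bar> < 1"
  proof cases
    case 1
    then show ?thesis
      using verlet_step_size_bounds[OF h \<omega> czero] h by (simp add: osc_sin_def osc_cos_def)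
  next
    case 2
    then show ?thesis using rotation_step_size_bounds[OF 2 c(2) h \<omega> cpos] by blast
  qed
  then show "osc_sin c h > 0" "\<bar>osc_cos c h - h / 2 * osc_sin c h * (1 - c\<^sup>2)\<bar> \<le> 1"
    "\<bar>osc_cos c h - h / 2 * osc_sin c h * (1 - c\<^sup>2 + 1 / \<omega>\<^sup>2)\<bar> < 1" by auto
qed

section \<open>Stability\<close>

lemma Linv_quadratic_bounds:
  assumes S: "S > 0" and p: "p \<in> carrier_vec d"
  defines "w \<equiv> Linv S d *\<^sub>v p"
  shows "(ds S d)\<^sup>2 / 4 * (p \<bullet> p) \<le> - (w \<bullet> (Lmat S d *\<^sub>v w))"
    and "- (w \<bullet> (Lmat S d *\<^sub>v w)) \<le> (p \<bullet> p) / (omega1 S d)\<^sup>2"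
proof -
  have w: "w \<in> carrier_vec d" and Lw: "Lmat S d *\<^sub>v w = p"
    using S Lmat_Linv_vec[OF S p] by (simp_all add: w_def)
  show "(ds S d)\<^sup>2 / 4 * (p \<bullet> p) \<le> - (w \<bullet> (Lmat S d *\<^sub>v w))"
    using Lmat_square_bound[OF S w] ds_pos[OF S, of d] unfolding Lw by (simp add: field_simps)
  have "w \<bullet> p = p \<bullet> w" by (rule comm_scalar_prod[OF w p])
  then show "- (w \<bullet> (Lmat S d *\<^sub>v w)) \<le> (p \<bullet> p) / (omega1 S d)\<^sup>2"
    using Linv_bounds(2)[OF S p] omega1_pos[OF S, of d] unfolding Lw
    by (simp add: w_def field_simps)
qed

lemma quad_energy_bounds:
  assumes S: "S > 0" and u: "u \<in> carrier_vec d" and p: "p \<in> carrier_vec d"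
    and \<beta>: "\<beta> \<ge> 0" and \<gamma>: "\<gamma> \<ge> 0" and q: "q > 0"
  defines "\<omega> \<equiv> omega1 S d" and "K \<equiv> 4 / (ds S d)\<^sup>2"
  shows "(\<beta> * \<omega>\<^sup>2 + \<alpha> - \<gamma> / \<omega>\<^sup>2) * (u \<bullet> u) + q / K * (p \<bullet> p) \<le> quad_energy S d \<beta> \<alpha> \<gamma> q u p"
    and "quad_energy S d \<beta> \<alpha> \<gamma> q u p \<le> (\<beta> * K + \<bar>\<alpha>\<bar>) * (u \<bullet> u) + q / \<omega>\<^sup>2 * (p \<bullet> p)"
proof -
  have \<omega>: "\<omega>\<^sup>2 > 0" using omega1_pos[OF S, of d] by (simp add: \<omega>_def)
  define X where "X = - (u \<bullet> (Lmat S d *\<^sub>v u))"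
  define Y where "Y = - (u \<bullet> (Linv S d *\<^sub>v u))"
  define Z where "Z = - ((Linv S d *\<^sub>v p) \<bullet> (Lmat S d *\<^sub>v (Linv S d *\<^sub>v p)))"
  have E: "quad_energy S d \<beta> \<alpha> \<gamma> q u p = \<beta> * X + \<alpha> * (u \<bullet> u) - \<gamma> * Y + q * Z"
    by (simp add: quad_energy_def X_def Y_def Z_def)
  have X: "\<omega>\<^sup>2 * (u \<bullet> u) \<le> X" "X \<le> K * (u \<bullet> u)"
    using Lmat_coercive[OF S u] Lmat_bounded[OF S u] by (simp_all add: X_def \<omega>_def K_def)
  have Y: "0 \<le> Y" "Y \<le> (u \<bullet> u) / \<omega>\<^sup>2"
    using Linv_bounds[OF S u] \<omega> by (simp_all add: Y_def \<omega>_def field_simps)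
  have Z: "(p \<bullet> p) / K \<le> Z" "Z \<le> (p \<bullet> p) / \<omega>\<^sup>2"
    using Linv_quadratic_bounds[OF S p] by (simp_all add: Z_def \<omega>_def K_def mult.commute)
  have "\<beta> * (\<omega>\<^sup>2 * (u \<bullet> u)) \<le> \<beta> * X" "\<gamma> * Y \<le> \<gamma> * ((u \<bullet> u) / \<omega>\<^sup>2)" "q * ((p \<bullet> p) / K) \<le> q * Z"
    using mult_left_mono[OF X(1) \<beta>] mult_left_mono[OF Y(2) \<gamma>] mult_left_mono[OF Z(1), of q] q by simp_all
  then show "(\<beta> * \<omega>\<^sup>2 + \<alpha> - \<gamma> / \<omega>\<^sup>2) * (u \<bullet> u) + q / K * (p \<bullet> p) \<le> quad_energy S d \<beta> \<alpha> \<gamma> q u p"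
    unfolding E by (simp add: algebra_simps)
  have "\<beta> * X \<le> \<beta> * (K * (u \<bullet> u))" "0 \<le> \<gamma> * Y" "q * Z \<le> q * ((p \<bullet> p) / \<omega>\<^sup>2)"
    "\<alpha> * (u \<bullet> u) \<le> \<bar>\<alpha>\<bar> * (u \<bullet> u)"
    using mult_left_mono[OF X(2) \<beta>] mult_left_mono[OF Z(2), of q] \<gamma> Y(1) q
      mult_right_mono[OF abs_ge_self real_scalar_prod_self_nonneg[of u]] by simp_all
  then show "quad_energy S d \<beta> \<alpha> \<gamma> q u p \<le> (\<beta> * K + \<bar>\<alpha>\<bar>) * (u \<bullet> u) + q / \<omega>\<^sup>2 * (p \<bullet> p)"
    unfolding E by (simp add: algebra_simps)
qed

lemma strang_energy_coefficients:
  fixes C s t a c \<omega> :: real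
  assumes pyth: "C\<^sup>2 + c\<^sup>2 * s\<^sup>2 = 1" and s: "s > 0" and \<omega>: "\<omega> > 0"
    and P0: "\<bar>C - t * s * a\<bar> \<le> 1" and P1: "\<bar>C - t * s * (a + 1 / \<omega>\<^sup>2)\<bar> < 1"
  defines "\<beta> \<equiv> c\<^sup>2 * s + 2 * C * t * a - s * t\<^sup>2 * a\<^sup>2"
    and "\<alpha> \<equiv> 2 * t * C - 2 * s * t\<^sup>2 * a" and "\<gamma> \<equiv> s * t\<^sup>2"
  shows "0 \<le> \<beta>" and "0 < \<beta> * \<omega>\<^sup>2 + \<alpha> - \<gamma> / \<omega>\<^sup>2"
proof -
  have s\<beta>: "s * \<beta> = 1 - (C - t * s * a)\<^sup>2"
    using pyth by (simp add: \<beta>_def power2_eq_square algebra_simps)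
  have "0 \<le> 1 - (C - t * s * a)\<^sup>2" using P0 by (simp add: abs_square_le_1)
  then have "0 \<le> s * \<beta>" using s\<beta> by simp
  then show "0 \<le> \<beta>" using s by (simp add: zero_le_mult_iff)
  have "s * (\<beta> * \<omega>\<^sup>2 + \<alpha> - \<gamma> / \<omega>\<^sup>2) = (s * \<beta>) * \<omega>\<^sup>2 + s * \<alpha> - s * \<gamma> / \<omega>\<^sup>2"
    by (simp add: algebra_simps)
  also have "\<dots> = \<omega>\<^sup>2 * (1 - (C - t * s * (a + 1 / \<omega>\<^sup>2))\<^sup>2)"
    unfolding s\<beta> using \<omega> by (simp add: \<alpha>_def \<gamma>_def field_simps power2_eq_square)
  finally have "s * (\<beta> * \<omega>\<^sup>2 + \<alpha> - \<gamma> / \<omega>\<^sup>2) = \<omega>\<^sup>2 * (1 - (C - t * s * (a + 1 / \<omega>\<^sup>2))\<^sup>2)" .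
  moreover have "0 < \<omega>\<^sup>2 * (1 - (C - t * s * (a + 1 / \<omega>\<^sup>2))\<^sup>2)"
    using P1 \<omega> by (simp add: abs_square_less_1)
  ultimately have "0 < s * (\<beta> * \<omega>\<^sup>2 + \<alpha> - \<gamma> / \<omega>\<^sup>2)" by simp
  then show "0 < \<beta> * \<omega>\<^sup>2 + \<alpha> - \<gamma> / \<omega>\<^sup>2" using s by (simp add: zero_less_mult_iff)
qed

lemma scalar_prod_self_split:
  assumes "(x :: real vec) \<in> carrier_vec (d + n)"
  shows "x \<bullet> x = vec_first x d \<bullet> vec_first x d + vec_last x n \<bullet> vec_last x n"
proof -
  have "x \<bullet> x = (vec_first x d @\<^sub>v vec_last x n) \<bullet> (vec_first x d @\<^sub>v vec_last x n)"
    by (simp only: vec_first_last_append[OF assms])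
  also have "\<dots> = vec_first x d \<bullet> vec_first x d + vec_last x n \<bullet> vec_last x n"
    by (rule scalar_prod_append) (rule vec_first_carrier vec_last_carrier)+
  finally show ?thesis .
qed

lemma quad_energy_equivalent_norm:
  assumes S: "S > 0" and \<beta>: "0 \<le> \<beta>" and \<gamma>: "0 \<le> \<gamma>" and q: "q > 0"
    and pos: "0 < \<beta> * (omega1 S d)\<^sup>2 + \<alpha> - \<gamma> / (omega1 S d)\<^sup>2"
  shows "\<exists>m M. 0 < m \<and> (\<forall>x \<in> carrier_vec (2 * d).
           m * (x \<bullet> x) \<le> quad_energy S d \<beta> \<alpha> \<gamma> q (vec_first x d) (vec_last x d) \<and>
           quad_energy S d \<beta> \<alpha> \<gamma> q (vec_first x d) (vec_last x d) \<le> M * (x \<bullet> x))"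
proof -
  define \<omega> where "\<omega> = omega1 S d"
  define K where "K = 4 / (ds S d)\<^sup>2"
  have K: "K > 0" using ds_pos[OF S, of d] by (simp add: K_def)
  define m where "m = min (\<beta> * \<omega>\<^sup>2 + \<alpha> - \<gamma> / \<omega>\<^sup>2) (q / K)"
  define M where "M = max (\<beta> * K + \<bar>\<alpha>\<bar>) (q / \<omega>\<^sup>2)"
  have "m * (x \<bullet> x) \<le> quad_energy S d \<beta> \<alpha> \<gamma> q (vec_first x d) (vec_last x d) \<and>
      quad_energy S d \<beta> \<alpha> \<gamma> q (vec_first x d) (vec_last x d) \<le> M * (x \<bullet> x)"
    if x: "x \<in> carrier_vec (2 * d)" for x
  proof -
    let ?u = "vec_first x d" and ?p = "vec_last x d"
    have xx: "x \<bullet> x = ?u \<bullet> ?u + ?p \<bullet> ?p" using x by (simp add: scalar_prod_self_split mult_2)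
    have uu: "0 \<le> ?u \<bullet> ?u" and pp: "0 \<le> ?p \<bullet> ?p" by (rule real_scalar_prod_self_nonneg)+
    note bounds = quad_energy_bounds[OF S vec_first_carrier[of x d] vec_last_carrier[of x d] \<beta> \<gamma> q,
        where \<alpha> = \<alpha>, folded \<omega>_def K_def]
    have "m * (?u \<bullet> ?u) \<le> (\<beta> * \<omega>\<^sup>2 + \<alpha> - \<gamma> / \<omega>\<^sup>2) * (?u \<bullet> ?u)"
      "m * (?p \<bullet> ?p) \<le> q / K * (?p \<bullet> ?p)"
      "(\<beta> * K + \<bar>\<alpha>\<bar>) * (?u \<bullet> ?u) \<le> M * (?u \<bullet> ?u)"
      "q / \<omega>\<^sup>2 * (?p \<bullet> ?p) \<le> M * (?p \<bullet> ?p)"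
      unfolding m_def M_def
      by (rule mult_right_mono[OF min.cobounded1 uu] mult_right_mono[OF min.cobounded2 pp]
          mult_right_mono[OF max.cobounded1 uu] mult_right_mono[OF max.cobounded2 pp])+
    with bounds show ?thesis unfolding xx distrib_left by linarith
  qed
  moreover have "0 < m" using pos q K by (simp add: m_def \<omega>_def)
  ultimately show ?thesis by blast
qed

lemma strang_energy_equivalent_norm:
  fixes S c h :: real
  assumes S: "S > 0" and c: "0 \<le> c" "c \<le> 1" and h: "h > 0"
    and cpos: "c > 0 \<Longrightarrow> c * h + 2 * arctan (h * (1 + (1 - c\<^sup>2) * (omega1 S d)\<^sup>2)
                                         / (2 * c * (omega1 S d)\<^sup>2)) < pi"
    and czero: "c = 0 \<Longrightarrow> h < 2 * omega1 S d / sqrt (1 + (omega1 S d)\<^sup>2)"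
  shows "\<exists>m M. 0 < m \<and> (\<forall>x \<in> carrier_vec (2 * d).
           m * (x \<bullet> x) \<le> strang_energy S d c h x \<and> strang_energy S d c h x \<le> M * (x \<bullet> x))"
proof -
  define C where "C = osc_cos c h"
  define s where "s = osc_sin c h"
  define t where "t = h / 2"
  define a where "a = 1 - c\<^sup>2"
  note bounds = step_size_condition_bounds[OF c h omega1_pos[OF S] cpos czero]
  have s: "s > 0" using bounds(1) by (simp add: s_def)
  have coeffs: "0 \<le> c\<^sup>2 * s + 2 * C * t * a - s * t\<^sup>2 * a\<^sup>2"
    "0 < (c\<^sup>2 * s + 2 * C * t * a - s * t\<^sup>2 * a\<^sup>2) * (omega1 S d)\<^sup>2 + (2 * t * C - 2 * s * t\<^sup>2 * a)
      - s * t\<^sup>2 / (omega1 S d)\<^sup>2"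
    by (rule strang_energy_coefficients[OF osc_pythagoras[of c h, folded C_def s_def] s omega1_pos[OF S]];
        use bounds in \<open>simp add: C_def s_def t_def a_def mult_ac\<close>)+
  have "0 \<le> s * t\<^sup>2" using s by simp
  from quad_energy_equivalent_norm[OF S coeffs(1) this s coeffs(2)] show ?thesis
    unfolding strang_energy_def Let_def C_def s_def t_def a_def .
qed

lemma bounded_iterates_of_conserved_form:
  fixes f :: "real vec \<Rightarrow> real vec" and G :: "real vec \<Rightarrow> real"
  assumes step: "\<And>x. x \<in> carrier_vec n \<Longrightarrow> f x \<in> carrier_vec n \<and> G (f x) = G x"
    and m: "0 < m" and equiv: "\<forall>x \<in> carrier_vec n. m * (x \<bullet> x) \<le> G x \<and> G x \<le> M * (x \<bullet> x)"
  shows "\<exists>C. \<forall>k. \<forall>x. dim_vec x = n \<longrightarrow> vnorm ((f ^^ k) x) \<le> C * vnorm x"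
proof (intro exI allI impI)
  fix k and x :: "real vec"
  assume "dim_vec x = n"
  then have x: "x \<in> carrier_vec n" by (rule carrier_vecI)
  have iter: "(f ^^ k) x \<in> carrier_vec n \<and> G ((f ^^ k) x) = G x"
    by (induction k) (simp_all add: x step)
  then have "m * ((f ^^ k) x \<bullet> (f ^^ k) x) \<le> M * (x \<bullet> x)"
    using equiv x by (metis order_trans)
  then have "(f ^^ k) x \<bullet> (f ^^ k) x \<le> M / m * (x \<bullet> x)"
    using m by (simp add: field_simps)
  then have "sqrt ((f ^^ k) x \<bullet> (f ^^ k) x) \<le> sqrt (M / m) * sqrt (x \<bullet> x)"
    by (metis real_sqrt_le_mono real_sqrt_mult)
  then show "vnorm ((f ^^ k) x) \<le> sqrt (M / m) * vnorm x"
    by (simp add: vnorm_eq_sqrt_scalar_prod)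
qed

theorem theorem8p1:
  fixes S h c :: real and d :: nat
  assumes "S > 0" and "d \<ge> 1" and "0 \<le> c" and "c \<le> 1" and "h > 0"
    and "c > 0 \<Longrightarrow> c * h + 2 * arctan (h * (1 + (1 - c\<^sup>2) * (omega1 S d)\<^sup>2)
                                         / (2 * c * (omega1 S d)\<^sup>2)) < pi"
    and "c = 0 \<Longrightarrow> h < 2 * omega1 S d / sqrt (1 + (omega1 S d)\<^sup>2)"
  shows "\<exists>C. \<forall>n::nat. \<forall>x. dim_vec x = 2 * d \<longrightarrow>
           vnorm ((strang S d c h ^^ n) x) \<le> C * vnorm x"
proof -
  obtain m M where "0 < m" and equiv: "\<forall>x \<in> carrier_vec (2 * d).
      m * (x \<bullet> x) \<le> strang_energy S d c h x \<and> strang_energy S d c h x \<le> M * (x \<bullet> x)"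
    using strang_energy_equivalent_norm[OF assms(1,3,4,5,6,7)] by blast
  then show ?thesis
    using bounded_iterates_of_conserved_form strang_energy_invariant[OF assms(1,5)] by blast
qed

end
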